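(* Assume (A1)–(A3), let SLPMM be run with any parameters $\sigma,\alpha>0$, let $K\ge1$ be an integer and $\bar x^K:=\frac1K\sum_{k=0}^{K-1}x^k$. Then for every $z\in\Phi$, $$\mathbb E[f(\bar x^K)]-f(z)\le\frac{\kappa_f^2}{2\alpha}+\frac{\sigma}{2}\nu_g^2+\frac{\alpha}{2K}R^2.$$
   Context: Let $\mathcal C\subset\mathbb R^n$ be a nonempty compact convex set. Let $\xi$ be a random vector whose distribution is supported on $\Xi\subseteq\mathbb R^q$, and let $F:\mathcal C\times\Xi\to\mathbb R$ and $G_i:\mathcal C\times\Xi\to\mathbb R$ ($i=1,\dots,p$) be such that $F(\cdot,\xi)$, $G_i(\cdot,\xi)$ are convex and continuous on $\mathcal C$ for every $\xi$, and $f(x):=\mathbb E[F(x,\xi)]$, $g_i(x):=\mathbb E[G_i(x,\xi)]$ are finite on $\mathcal C$. Write $G=(G_1,\dots,G_p)^T$. The feasible set is $\Phi:=\{x\in\mathcal C: g_i(x)\le0,\ i=1,\dots,p\}$. Stochastic subgradients: $v_0(x,\xi)\in\partial_xF(x,\xi)$, $v_i(x,\xi)\in\partial_xG_i(x,\xi)$. $[t]_+=\max\{t,0\}$, $[t]_+^2=(\max\{t,0\})^2$. SLPMM: fix $\sigma,\alpha>0$, $x^0\in\mathcal C$, $\lambda^0=0\in\mathbb R^p$, i.i.d. copies $\xi^0,\xi^1,\dots$ of $\xi$. For $k\ge0$, $x^{k+1}=\arg\min_{x\in\mathcal C}\{\mathcal L^k_\sigma(x,\lambda^k)+\frac{\alpha}{2}\|x-x^k\|^2\}$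 with $\mathcal L^k_\sigma(x,\lambda):=F(x^k,\xi^k)+\langle v_0(x^k,\xi^k),x-x^k\rangle+\frac{1}{2\sigma}[\sum_{i=1}^p[\lambda_i+\sigma(G_i(x^k,\xi^k)+\langle v_i(x^k,\xi^k),x-x^k\rangle)]_+^2-\|\lambda\|^2]$, and $\lambda_i^{k+1}=[\lambda_i^k+\sigma(G_i(x^k,\xi^k)+\langle v_i(x^k,\xi^k),x^{k+1}-x^k\rangle)]_+$. Assumptions: (A1) $\|x'-x''\|\le R$ on $\mathcal C$. (A2) $\|G(x,\xi)\|\le\nu_g$ for all $x\in\mathcal C,\xi\in\Xi$. (A3) $\|v_0(x,\xi)\|\le\kappa_f$, $\|v_i(x,\xi)\|\le\kappa_g$ for all $x,\xi$. *)

theory Defs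
  imports "HOL-Analysis.Analysis" "HOL-Probability.Probability"
begin

definition pos_part :: "real \<Rightarrow> real" where
  "pos_part t = max t 0"

definition subgrad_on :: "'a::real_inner set \<Rightarrow> ('a \<Rightarrow> real) \<Rightarrow> 'a \<Rightarrow> 'a \<Rightarrow> bool" where
  "subgrad_on C g x v \<longleftrightarrow> (\<forall>y\<in>C. g y \<ge> g x + inner v (y - x))"

text \<open>Constraints are indexed by i = 1..p; multipliers
  are functions nat => real, only components 1..p are used.\<close>
definition lin_AL ::
  "('a::real_inner \<Rightarrow> 'q \<Rightarrow> real) \<Rightarrow> (nat \<Rightarrow> 'a \<Rightarrow> 'q \<Rightarrow> real) \<Rightarrow>
   ('a \<Rightarrow> 'q \<Rightarrow> 'a) \<Rightarrow> (nat \<Rightarrow> 'a \<Rightarrow> 'q \<Rightarrow> 'a) \<Rightarrow> nat \<Rightarrow> real \<Rightarrow>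
   'a \<Rightarrow> 'q \<Rightarrow> 'a \<Rightarrow> (nat \<Rightarrow> real) \<Rightarrow> real" where
  "lin_AL F G v0 v p \<sigma> xk e x lam =
     F xk e + inner (v0 xk e) (x - xk)
     + (1 / (2 * \<sigma>)) * ((\<Sum>i=1..p. (pos_part (lam i + \<sigma> * (G i xk e + inner (v i xk e) (x - xk))))\<^sup>2)
                       - (\<Sum>i=1..p. (lam i)\<^sup>2))"

end

(*
  Each SLPMM step is a proximal step on a convex model of the augmented Lagrangian. The
  three-point inequality for such steps, combined with the subgradient inequalities and Young's
  inequality for the term involving v_0, gives for every sample path
    F(x^k,xi^k) - F(z,xi^k) <= kappa_f^2/(2 alpha) + sigma nu_g^2/2 + <lambda^k, G(z,xi^k)>
        + alpha/2 (|z - x^k|^2 - |z - x^(k+1)|^2) + (|lambda^k|^2 - |lambda^(k+1)|^2)/(2 sigma),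
  and summing over k < K telescopes. The iterates x^k, lambda^k depend only on xi^0, ..., xi^(k-1)
  and are hence independent of xi^k: in expectation F(x^k,xi^k) becomes f(x^k) and the
  multiplier term becomes E[lambda_i^k] g_i(z) <= 0. Jensen's inequality for the averaged iterate
  concludes. The iterates are measurable because each proximal point is the pointwise limit of
  minimizers over finite nets of C.
*)
theory Submission
  imports Defs
begin

lemma norm_add_scaleR_power2:
  fixes a b :: "'a::real_inner"
  shows "(norm (a + t *\<^sub>R b))\<^sup>2 = (norm a)\<^sup>2 + 2 * t * inner a b + t\<^sup>2 * (norm b)\<^sup>2"
  unfolding power2_norm_eq_inner
  by (simp add: inner_add_left inner_add_right inner_commute algebra_simps power2_eq_square)

lemma nonneg_if_nonneg_add_small_multiples:
  fixes A c :: real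
  assumes "\<And>t. 0 < t \<Longrightarrow> t \<le> 1 \<Longrightarrow> 0 \<le> A + t * c"
  shows "0 \<le> A"
proof (rule ccontr)
  assume "\<not> 0 \<le> A"
  define d where "d = 2 * (\<bar>c\<bar> + 1)"
  define t where "t = min 1 (- A / d)"
  have d: "0 < d" unfolding d_def by simp
  have "0 < - A / d"
    using \<open>\<not> 0 \<le> A\<close> d by (intro divide_pos_pos) auto
  then have t: "0 < t" "t \<le> 1"
    unfolding t_def by auto
  have "t \<le> - A / d" unfolding t_def by simp
  then have "t * d \<le> - A" using d by (simp add: field_simps)
  moreover have "t * c \<le> t * \<bar>c\<bar>" using t by (intro mult_left_mono) auto
  moreover have "t * \<bar>c\<bar> < t * d" using t unfolding d_def by simp
  ultimately have "t * c < - A" by linarith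
  with assms[OF t] show False by linarith
qed

lemma convex_prox_three_point:
  fixes h :: "'a::real_inner \<Rightarrow> real"
  assumes cvx: "convex_on C h" and C: "convex C" and x1: "x1 \<in> C" and a: "a > 0"
    and min: "\<forall>y\<in>C. h x1 + a/2 * (norm (x1 - xk))\<^sup>2 \<le> h y + a/2 * (norm (y - xk))\<^sup>2"
    and z: "z \<in> C"
  shows "h x1 + a/2 * (norm (x1 - xk))\<^sup>2 + a/2 * (norm (z - x1))\<^sup>2 \<le> h z + a/2 * (norm (z - xk))\<^sup>2"
proof -
  define I where "I = inner (x1 - xk) (z - x1)"
  define D where "D = (norm (z - x1))\<^sup>2"
  \<comment> \<open>first-order optimality along the segment from x1 towards z\<close>
  have "0 \<le> (h z - h x1 + a * I) + t * (a/2 * D)" if t: "0 < t" "t \<le> 1" for t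
  proof -
    define y where "y = (1 - t) *\<^sub>R x1 + t *\<^sub>R z"
    have "y \<in> C" unfolding y_def using C x1 z t by (simp add: convex_def)
    then have "h x1 + a/2 * (norm (x1 - xk))\<^sup>2 \<le> h y + a/2 * (norm (y - xk))\<^sup>2"
      using min by blast
    also have "(norm (y - xk))\<^sup>2 = (norm (x1 - xk))\<^sup>2 + 2 * t * I + t\<^sup>2 * D"
    proof -
      have "y - xk = (x1 - xk) + t *\<^sub>R (z - x1)" unfolding y_def by (simp add: algebra_simps)
      then show ?thesis unfolding D_def I_def by (metis norm_add_scaleR_power2)
    qed
    also have "h y \<le> (1 - t) * h x1 + t * h z"
      unfolding y_def using convex_onD[OF cvx, of t x1 z] t x1 z by simp
    finally have "0 \<le> t * ((h z - h x1 + a * I) + t * (a/2 * D))"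
      by (simp add: algebra_simps power2_eq_square)
    then show ?thesis using t by (simp add: zero_le_mult_iff)
  qed
  then have "0 \<le> h z - h x1 + a * I"
    by (rule nonneg_if_nonneg_add_small_multiples)
  moreover have "(norm (z - xk))\<^sup>2 = D + 2 * I + (norm (x1 - xk))\<^sup>2"
    using norm_add_scaleR_power2[of "z - x1" 1 "x1 - xk"]
    unfolding D_def I_def by (simp add: inner_commute)
  ultimately show ?thesis unfolding D_def by (simp add: algebra_simps)
qed

lemma pos_part_power2_convex_comb:
  fixes a b t :: real
  assumes "0 \<le> t" "t \<le> 1"
  shows "(pos_part ((1 - t) * a + t * b))\<^sup>2 \<le> (1 - t) * (pos_part a)\<^sup>2 + t * (pos_part b)\<^sup>2"
proof -
  define A where "A = pos_part a"
  define B where "B = pos_part b"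
  have A: "0 \<le> A" "a \<le> A" and B: "0 \<le> B" "b \<le> B" unfolding A_def B_def pos_part_def by auto
  have "(1 - t) * a + t * b \<le> (1 - t) * A + t * B"
    using A B assms by (intro add_mono mult_left_mono) auto
  then have "pos_part ((1 - t) * a + t * b) \<le> (1 - t) * A + t * B"
    unfolding pos_part_def using A B assms by auto
  then have "(pos_part ((1 - t) * a + t * b))\<^sup>2 \<le> ((1 - t) * A + t * B)\<^sup>2"
    by (intro power_mono) (auto simp: pos_part_def)
  also have "\<dots> = (1 - t) * A\<^sup>2 + t * B\<^sup>2 - t * (1 - t) * (A - B)\<^sup>2"
    by (simp add: algebra_simps power2_eq_square)
  also have "\<dots> \<le> (1 - t) * A\<^sup>2 + t * B\<^sup>2"
    using assms by simp
  finally show ?thesis unfolding A_def B_def .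
qed

lemma lin_AL_convex:
  assumes "\<sigma> > 0"
  shows "convex_on UNIV (\<lambda>x. lin_AL F G v0 v p \<sigma> xk e x lam)"
proof (rule convex_onI)
  fix t :: real and x y :: 'a
  assume t: "0 < t" "t < 1"
  define k where "k = 1 / (2 * \<sigma>)"
  define L where "L i x = lam i + \<sigma> * (G i xk e + inner (v i xk e) (x - xk))" for i x
  have L_affine: "L i ((1 - t) *\<^sub>R x + t *\<^sub>R y) = (1 - t) * L i x + t * L i y" for i
    unfolding L_def by (simp add: algebra_simps inner_diff_right inner_add_right)
  have "(\<Sum>i=1..p. (pos_part (L i ((1 - t) *\<^sub>R x + t *\<^sub>R y)))\<^sup>2)
      \<le> (1 - t) * (\<Sum>i=1..p. (pos_part (L i x))\<^sup>2) + t * (\<Sum>i=1..p. (pos_part (L i y))\<^sup>2)"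
    unfolding L_affine sum_distrib_left sum.distrib[symmetric]
    using t by (intro sum_mono pos_part_power2_convex_comb) auto
  then have sum_le: "k * (\<Sum>i=1..p. (pos_part (L i ((1 - t) *\<^sub>R x + t *\<^sub>R y)))\<^sup>2)
      \<le> k * ((1 - t) * (\<Sum>i=1..p. (pos_part (L i x))\<^sup>2) + t * (\<Sum>i=1..p. (pos_part (L i y))\<^sup>2))"
    using assms by (intro mult_left_mono) (auto simp: k_def)
  have lin_eq: "inner (v0 xk e) ((1 - t) *\<^sub>R x + t *\<^sub>R y - xk)
      = (1 - t) * inner (v0 xk e) (x - xk) + t * inner (v0 xk e) (y - xk)"
    by (simp add: algebra_simps)
  have combine: "c + lxy + k * (Sxy - SL) \<le> (1 - t) * (c + lx + k * (Sx - SL)) + t * (c + ly + k * (Sy - SL))"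
    if "k * Sxy \<le> k * ((1 - t) * Sx + t * Sy)" and "lxy = (1 - t) * lx + t * ly"
    for c lx ly lxy Sxy Sx Sy SL :: real
    using that by (simp add: algebra_simps)
  show "lin_AL F G v0 v p \<sigma> xk e ((1 - t) *\<^sub>R x + t *\<^sub>R y) lam
        \<le> (1 - t) * lin_AL F G v0 v p \<sigma> xk e x lam + t * lin_AL F G v0 v p \<sigma> xk e y lam"
    unfolding lin_AL_def L_def[symmetric] k_def[symmetric] by (rule combine[OF sum_le lin_eq])
qed simp

lemma lin_AL_continuous: "continuous_on UNIV (\<lambda>x. lin_AL F G v0 v p \<sigma> xk e x lam)"
  unfolding lin_AL_def pos_part_def by (intro continuous_intros)

lemma pos_part_power2_le_power2: "(pos_part a)\<^sup>2 \<le> a\<^sup>2"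
  unfolding pos_part_def by (cases "a \<ge> 0") (auto simp: max_def)

lemma pos_part_power2_mono: "a \<le> b \<Longrightarrow> (pos_part a)\<^sup>2 \<le> (pos_part b)\<^sup>2"
  unfolding pos_part_def by (intro power_mono) auto

lemma lin_AL_le_at_feasible:
  fixes x z :: "'a::real_inner"
  assumes \<sigma>: "\<sigma> > 0" and z: "z \<in> C"
    and sub0: "subgrad_on C (\<lambda>y. F y e) x (v0 x e)"
    and subi: "\<And>i. i \<in> {1..p} \<Longrightarrow> subgrad_on C (\<lambda>y. G i y e) x (v i x e)"
    and G_bound: "sqrt (\<Sum>i=1..p. (G i z e)\<^sup>2) \<le> \<nu>g"
  shows "lin_AL F G v0 v p \<sigma> x e z lam \<le> F z e + (\<Sum>i=1..p. lam i * G i z e) + \<sigma> / 2 * \<nu>g\<^sup>2"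
proof -
  define SG where "SG = (\<Sum>i=1..p. (G i z e)\<^sup>2)"
  have "(pos_part (lam i + \<sigma> * (G i x e + inner (v i x e) (z - x))))\<^sup>2
      \<le> (lam i)\<^sup>2 + 2 * \<sigma> * (lam i * G i z e) + \<sigma>\<^sup>2 * (G i z e)\<^sup>2" if i: "i \<in> {1..p}" for i
  proof -
    have "G i x e + inner (v i x e) (z - x) \<le> G i z e"
      using subi[OF i] z unfolding subgrad_on_def by auto
    then have "(pos_part (lam i + \<sigma> * (G i x e + inner (v i x e) (z - x))))\<^sup>2
        \<le> (pos_part (lam i + \<sigma> * G i z e))\<^sup>2"
      using \<sigma> by (intro pos_part_power2_mono) simp
    also have "\<dots> \<le> (lam i + \<sigma> * G i z e)\<^sup>2" by (rule pos_part_power2_le_power2)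
    finally show ?thesis by (simp add: power2_eq_square algebra_simps)
  qed
  then have "(\<Sum>i=1..p. (pos_part (lam i + \<sigma> * (G i x e + inner (v i x e) (z - x))))\<^sup>2)
      \<le> (\<Sum>i=1..p. (lam i)\<^sup>2 + 2 * \<sigma> * (lam i * G i z e) + \<sigma>\<^sup>2 * (G i z e)\<^sup>2)"
    by (rule sum_mono)
  also have "\<dots> = (\<Sum>i=1..p. (lam i)\<^sup>2) + 2 * \<sigma> * (\<Sum>i=1..p. lam i * G i z e) + \<sigma>\<^sup>2 * SG"
    unfolding SG_def by (simp add: sum.distrib sum_distrib_left)
  finally have sum_le: "1 / (2 * \<sigma>) * ((\<Sum>i=1..p. (pos_part (lam i + \<sigma> * (G i x e + inner (v i x e) (z - x))))\<^sup>2)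
      - (\<Sum>i=1..p. (lam i)\<^sup>2)) \<le> (\<Sum>i=1..p. lam i * G i z e) + \<sigma> / 2 * SG"
    using \<sigma> by (simp add: field_simps power2_eq_square)
  have "SG \<le> \<nu>g\<^sup>2"
  proof -
    have "SG = (sqrt SG)\<^sup>2" unfolding SG_def by (simp add: sum_nonneg)
    also have "\<dots> \<le> \<nu>g\<^sup>2" using G_bound unfolding SG_def by (intro power_mono) (auto simp: sum_nonneg)
    finally show ?thesis .
  qed
  moreover have "F x e + inner (v0 x e) (z - x) \<le> F z e"
    using sub0 z unfolding subgrad_on_def by auto
  ultimately show ?thesis
    using sum_le \<sigma> unfolding lin_AL_def by (smt (verit) mult_left_mono half_gt_zero)
qed

lemma linear_add_quadratic_lower_bound:
  fixes a k d :: real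
  assumes "a > 0"
  shows "- (k\<^sup>2 / (2 * a)) \<le> - k * d + a/2 * d\<^sup>2"
proof -
  have "a/2 * (d - k/a)\<^sup>2 = a/2 * d\<^sup>2 - k * d + k\<^sup>2 / (2 * a)"
    using assms by (simp add: power2_eq_square field_simps)
  moreover have "0 \<le> a/2 * (d - k/a)\<^sup>2" using assms by simp
  ultimately show ?thesis by linarith
qed

lemma lin_AL_prox_step_bound:
  fixes x x1 z :: "'a::real_inner"
  assumes \<sigma>: "\<sigma> > 0" and \<alpha>: "\<alpha> > 0" and C: "convex C"
    and x: "x \<in> C" and x1: "x1 \<in> C" and z: "z \<in> C"
    and sub0: "subgrad_on C (\<lambda>y. F y e) x (v0 x e)"
    and subi: "\<And>i. i \<in> {1..p} \<Longrightarrow> subgrad_on C (\<lambda>y. G i y e) x (v i x e)"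
    and v0_bound: "norm (v0 x e) \<le> \<kappa>f"
    and G_bound: "sqrt (\<Sum>i=1..p. (G i z e)\<^sup>2) \<le> \<nu>g"
    and min: "\<forall>y\<in>C. lin_AL F G v0 v p \<sigma> x e x1 lam + \<alpha>/2 * (norm (x1 - x))\<^sup>2
                 \<le> lin_AL F G v0 v p \<sigma> x e y lam + \<alpha>/2 * (norm (y - x))\<^sup>2"
    and lam': "\<And>i. i \<in> {1..p} \<Longrightarrow> lam' i = pos_part (lam i + \<sigma> * (G i x e + inner (v i x e) (x1 - x)))"
  shows "F x e - F z e \<le> \<kappa>f\<^sup>2 / (2 * \<alpha>) + \<sigma> / 2 * \<nu>g\<^sup>2 + (\<Sum>i=1..p. lam i * G i z e)
          + \<alpha>/2 * ((norm (z - x))\<^sup>2 - (norm (z - x1))\<^sup>2)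
          + 1 / (2 * \<sigma>) * ((\<Sum>i=1..p. (lam i)\<^sup>2) - (\<Sum>i=1..p. (lam' i)\<^sup>2))"
proof -
  define h where "h y = lin_AL F G v0 v p \<sigma> x e y lam" for y
  have "convex_on C h"
    unfolding h_def by (rule convex_on_subset[OF lin_AL_convex[OF \<sigma>] _ C]) simp
  then have three_point: "h x1 + \<alpha>/2 * (norm (x1 - x))\<^sup>2 + \<alpha>/2 * (norm (z - x1))\<^sup>2
      \<le> h z + \<alpha>/2 * (norm (z - x))\<^sup>2"
    using convex_prox_three_point[OF _ C x1 \<alpha> _ z] min unfolding h_def by blast
  have "(\<Sum>i=1..p. (pos_part (lam i + \<sigma> * (G i x e + inner (v i x e) (x1 - x))))\<^sup>2) = (\<Sum>i=1..p. (lam' i)\<^sup>2)"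
    using lam' by (intro sum.cong) auto
  then have h_x1: "h x1 = F x e + inner (v0 x e) (x1 - x)
      + 1 / (2 * \<sigma>) * ((\<Sum>i=1..p. (lam' i)\<^sup>2) - (\<Sum>i=1..p. (lam i)\<^sup>2))"
    unfolding h_def lin_AL_def by simp
  have h_z: "h z \<le> F z e + (\<Sum>i=1..p. lam i * G i z e) + \<sigma> / 2 * \<nu>g\<^sup>2"
    unfolding h_def using \<sigma> z sub0 subi G_bound by (rule lin_AL_le_at_feasible)
  have "\<bar>inner (v0 x e) (x1 - x)\<bar> \<le> \<kappa>f * norm (x1 - x)"
    using Cauchy_Schwarz_ineq2[of "v0 x e" "x1 - x"] v0_bound
    by (meson mult_right_mono norm_ge_zero order_trans)
  moreover have "- (\<kappa>f\<^sup>2 / (2 * \<alpha>)) \<le> - \<kappa>f * norm (x1 - x) + \<alpha>/2 * (norm (x1 - x))\<^sup>2"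
    by (rule linear_add_quadratic_lower_bound[OF \<alpha>])
  ultimately show ?thesis
    using three_point h_x1 h_z by (simp add: algebra_simps) linarith?
qed

lemma borel_measurable_uncurry_comp:
  fixes h :: "'a::second_countable_topology \<Rightarrow> 'b::second_countable_topology \<Rightarrow> 'c::topological_space"
  assumes h: "(\<lambda>(x, e). h x e) \<in> borel_measurable borel"
    and X: "X \<in> borel_measurable N" and E: "E \<in> borel_measurable N"
  shows "(\<lambda>\<omega>. h (X \<omega>) (E \<omega>)) \<in> borel_measurable N"
proof -
  have "(\<lambda>\<omega>. (X \<omega>, E \<omega>)) \<in> measurable N (borel \<Otimes>\<^sub>M borel)" using X E by (rule measurable_Pair)
  then have P: "(\<lambda>\<omega>. (X \<omega>, E \<omega>)) \<in> measurable N borel" by (simp add: borel_prod)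
  from measurable_compose[OF P h] show ?thesis by simp
qed

definition argmin_list :: "('a \<Rightarrow> real) \<Rightarrow> 'a \<Rightarrow> 'a list \<Rightarrow> 'a" where
  "argmin_list \<phi> d ds = foldr (\<lambda>x acc. if \<phi> x \<le> \<phi> acc then x else acc) ds d"

lemma argmin_list_Cons:
  "argmin_list \<phi> d (x # ds) = (if \<phi> x \<le> \<phi> (argmin_list \<phi> d ds) then x else argmin_list \<phi> d ds)"
  by (simp add: argmin_list_def)

lemma argmin_list_minimal:
  "argmin_list \<phi> d ds \<in> set (d # ds) \<and> (\<forall>y\<in>set (d # ds). \<phi> (argmin_list \<phi> d ds) \<le> \<phi> y)"
proof (induction ds)
  case Nil then show ?case by (simp add: argmin_list_def)
next
  case (Cons x ds)
  then show ?case unfolding argmin_list_Cons by (auto split: if_splits)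
qed

lemma borel_measurable_argmin_list:
  fixes \<psi> :: "'w \<Rightarrow> 'a::metric_space \<Rightarrow> real"
  assumes "\<And>y. y \<in> set (d # ds) \<Longrightarrow> (\<lambda>\<omega>. \<psi> \<omega> y) \<in> borel_measurable N"
  shows "(\<lambda>\<omega>. argmin_list (\<psi> \<omega>) d ds) \<in> borel_measurable N \<and>
    (\<lambda>\<omega>. \<psi> \<omega> (argmin_list (\<psi> \<omega>) d ds)) \<in> borel_measurable N"
  using assms
proof (induction ds)
  case Nil then show ?case by (simp add: argmin_list_def)
next
  case (Cons x ds)
  then have IH1: "(\<lambda>\<omega>. argmin_list (\<psi> \<omega>) d ds) \<in> borel_measurable N"
    and IH2: "(\<lambda>\<omega>. \<psi> \<omega> (argmin_list (\<psi> \<omega>) d ds)) \<in> borel_measurable N" by auto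
  have x: "(\<lambda>\<omega>. \<psi> \<omega> x) \<in> borel_measurable N" using Cons.prems by simp
  have P: "{\<omega> \<in> space N. \<psi> \<omega> x \<le> \<psi> \<omega> (argmin_list (\<psi> \<omega>) d ds)} \<in> sets N"
    using x IH2 by measurable
  have argmin_meas: "(\<lambda>\<omega>. argmin_list (\<psi> \<omega>) d (x # ds)) \<in> borel_measurable N"
    unfolding argmin_list_Cons by (rule measurable_If[OF _ IH1 P]) simp
  have min_meas: "(\<lambda>\<omega>. \<psi> \<omega> (argmin_list (\<psi> \<omega>) d (x # ds))) \<in> borel_measurable N"
  proof -
    have "(\<lambda>\<omega>. \<psi> \<omega> (argmin_list (\<psi> \<omega>) d (x # ds))) = (\<lambda>\<omega>.
        if \<psi> \<omega> x \<le> \<psi> \<omega> (argmin_list (\<psi> \<omega>) d ds) then \<psi> \<omega> x else \<psi> \<omega> (argmin_list (\<psi> \<omega>) d ds))"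
      unfolding argmin_list_Cons by (simp add: fun_eq_iff)
    then show ?thesis using measurable_If[OF x IH2 P] by simp
  qed
  show ?case using argmin_meas min_meas by simp
qed

lemma compact_finite_net:
  fixes C :: "'a::metric_space set"
  assumes "compact C" "C \<noteq> {}" "r > 0"
  obtains L where "L \<noteq> []" "set L \<subseteq> C" "C \<subseteq> (\<Union>x\<in>set L. ball x r)"
proof -
  have "C \<subseteq> (\<Union>x\<in>C. ball x r)" using assms(3) by (auto intro!: bexI)
  then obtain C' where C': "C' \<subseteq> C" "finite C'" "C \<subseteq> (\<Union>x\<in>C'. ball x r)"
    using compactE_image[OF assms(1), of C "\<lambda>x. ball x r"] by auto
  obtain L where "set L = C'" using finite_list[OF C'(2)] by blast
  moreover have "C' \<noteq> {}" using C'(3) assms(2) by auto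
  ultimately show ?thesis using C' that by auto
qed

lemma borel_measurable_strict_minimizer:
  fixes m :: "'w \<Rightarrow> 'a::euclidean_space" and \<psi> :: "'w \<Rightarrow> 'a \<Rightarrow> real"
  assumes C: "compact C" "C \<noteq> {}" and a: "a > 0"
    and meas: "\<And>d. d \<in> C \<Longrightarrow> (\<lambda>\<omega>. \<psi> \<omega> d) \<in> borel_measurable N"
    and m_in_C: "\<And>\<omega>. \<omega> \<in> space N \<Longrightarrow> m \<omega> \<in> C"
    and cont: "\<And>\<omega>. \<omega> \<in> space N \<Longrightarrow> continuous_on C (\<psi> \<omega>)"
    and growth: "\<And>\<omega> y. \<omega> \<in> space N \<Longrightarrow> y \<in> C \<Longrightarrow> \<psi> \<omega> (m \<omega>) + a * (norm (y - m \<omega>))\<^sup>2 \<le> \<psi> \<omega> y"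
  shows "m \<in> borel_measurable N"
proof -
  \<comment> \<open>m is the pointwise limit of exact minimizers over finite 1/(n+1)-nets of C\<close>
  have "\<exists>L. L \<noteq> [] \<and> set L \<subseteq> C \<and> C \<subseteq> (\<Union>x\<in>set L. ball x (1 / Suc n))" for n
  proof -
    obtain L where "L \<noteq> []" "set L \<subseteq> C" "C \<subseteq> (\<Union>x\<in>set L. ball x (1 / Suc n))"
      using compact_finite_net[OF C, of "1 / Suc n"] by auto
    then show ?thesis by blast
  qed
  then obtain L where L: "\<And>n. L n \<noteq> [] \<and> set (L n) \<subseteq> C \<and> C \<subseteq> (\<Union>x\<in>set (L n). ball x (1 / Suc n))"
    by metis
  have set_L: "set (hd (L n) # tl (L n)) = set (L n)" for n using L[of n] by simp
  define mn where "mn n \<omega> = argmin_list (\<psi> \<omega>) (hd (L n)) (tl (L n))" for n \<omega>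
  have mn_meas: "mn n \<in> borel_measurable N" for n
    unfolding mn_def using borel_measurable_argmin_list[of "hd (L n)" "tl (L n)" \<psi> N] meas L set_L
    by (metis subsetD)
  have mn_min: "mn n \<omega> \<in> set (L n) \<and> (\<forall>y\<in>set (L n). \<psi> \<omega> (mn n \<omega>) \<le> \<psi> \<omega> y)" for n \<omega>
    unfolding mn_def using argmin_list_minimal[of "\<psi> \<omega>" "hd (L n)" "tl (L n)"] set_L[of n]
    by (metis (no_types, lifting))
  show ?thesis
  proof (rule borel_measurable_LIMSEQ_metric[OF mn_meas])
    fix \<omega> assume \<omega>: "\<omega> \<in> space N"
    show "(\<lambda>n. mn n \<omega>) \<longlonglongrightarrow> m \<omega>"
    proof (rule metric_LIMSEQ_I)
      fix r :: real assume r: "r > 0"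
      have "a * r\<^sup>2 > 0" using a r by simp
      then obtain \<delta> where \<delta>: "\<delta> > 0"
        "\<And>x'. x' \<in> C \<Longrightarrow> dist x' (m \<omega>) < \<delta> \<Longrightarrow> dist (\<psi> \<omega> x') (\<psi> \<omega> (m \<omega>)) < a * r\<^sup>2"
        using cont[OF \<omega>] m_in_C[OF \<omega>] unfolding continuous_on_iff by metis
      obtain n0 where n0: "inverse (real (Suc n0)) < \<delta>" using reals_Archimedean[OF \<delta>(1)] by blast
      show "\<exists>n0. \<forall>n\<ge>n0. dist (mn n \<omega>) (m \<omega>) < r"
      proof (intro exI allI impI)
        fix n assume "n0 \<le> n"
        then have "1 / real (Suc n) \<le> 1 / real (Suc n0)" by (simp add: frac_le)
        then have "1 / real (Suc n) < \<delta>" using n0 by (simp add: inverse_eq_divide)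
        moreover obtain d where d: "d \<in> set (L n)" "dist d (m \<omega>) < 1 / Suc n"
          using L[of n] m_in_C[OF \<omega>] by (auto simp: dist_commute)
        moreover have "d \<in> C" "mn n \<omega> \<in> C" using d(1) mn_min L by blast+
        ultimately have "\<psi> \<omega> d < \<psi> \<omega> (m \<omega>) + a * r\<^sup>2"
          using \<delta>(2)[of d] by (simp add: dist_real_def)
        moreover have "\<psi> \<omega> (mn n \<omega>) \<le> \<psi> \<omega> d" using mn_min d(1) by blast
        moreover have "\<psi> \<omega> (m \<omega>) + a * (norm (mn n \<omega> - m \<omega>))\<^sup>2 \<le> \<psi> \<omega> (mn n \<omega>)"
          using growth[OF \<omega> \<open>mn n \<omega> \<in> C\<close>] .
        ultimately have "a * (norm (mn n \<omega> - m \<omega>))\<^sup>2 < a * r\<^sup>2" by linarith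
        then have "(norm (mn n \<omega> - m \<omega>))\<^sup>2 < r\<^sup>2" using a by simp
        then show "dist (mn n \<omega>) (m \<omega>) < r"
          using r by (simp add: dist_norm power_less_imp_less_base)
      qed
    qed
  qed
qed

lemma pos_part_borel_measurable[measurable]: "pos_part \<in> borel_measurable borel"
  unfolding pos_part_def by measurable

lemma lin_AL_borel_measurable:
  fixes F :: "'a::euclidean_space \<Rightarrow> 'q::euclidean_space \<Rightarrow> real"
  assumes F_meas: "(\<lambda>(x, e). F x e) \<in> borel_measurable borel"
    and G_meas: "\<And>i. i \<in> {1..p} \<Longrightarrow> (\<lambda>(x, e). G i x e) \<in> borel_measurable borel"
    and v0_meas: "(\<lambda>(x, e). v0 x e) \<in> borel_measurable borel"
    and v_meas: "\<And>i. i \<in> {1..p} \<Longrightarrow> (\<lambda>(x, e). v i x e) \<in> borel_measurable borel"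
    and X: "X \<in> borel_measurable N" and E: "E \<in> borel_measurable N" and Y: "Y \<in> borel_measurable N"
    and L: "\<And>i. i \<in> {1..p} \<Longrightarrow> (\<lambda>\<omega>. Lm \<omega> i) \<in> borel_measurable N"
  shows "(\<lambda>\<omega>. lin_AL F G v0 v p \<sigma> (X \<omega>) (E \<omega>) (Y \<omega>) (Lm \<omega>)) \<in> borel_measurable N"
proof -
  have F_comp: "(\<lambda>\<omega>. F (X \<omega>) (E \<omega>)) \<in> borel_measurable N"
    by (rule borel_measurable_uncurry_comp[OF F_meas X E])
  have v0_comp: "(\<lambda>\<omega>. v0 (X \<omega>) (E \<omega>)) \<in> borel_measurable N"
    by (rule borel_measurable_uncurry_comp[OF v0_meas X E])
  have "(\<lambda>\<omega>. \<Sum>i=1..p. (pos_part (Lm \<omega> i + \<sigma> * (G i (X \<omega>) (E \<omega>)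
      + inner (v i (X \<omega>) (E \<omega>)) (Y \<omega> - X \<omega>))))\<^sup>2) \<in> borel_measurable N"
  proof (rule borel_measurable_sum)
    fix i assume i: "i \<in> {1..p}"
    note [measurable] = L[OF i] X Y
      borel_measurable_uncurry_comp[OF G_meas[OF i] X E] borel_measurable_uncurry_comp[OF v_meas[OF i] X E]
    show "(\<lambda>\<omega>. (pos_part (Lm \<omega> i + \<sigma> * (G i (X \<omega>) (E \<omega>)
        + inner (v i (X \<omega>) (E \<omega>)) (Y \<omega> - X \<omega>))))\<^sup>2) \<in> borel_measurable N"
      by measurable
  qed
  moreover have "(\<lambda>\<omega>. \<Sum>i=1..p. (Lm \<omega> i)\<^sup>2) \<in> borel_measurable N"
    by (rule borel_measurable_sum) (use L in measurable)
  ultimately show ?thesis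
    using F_comp v0_comp X Y unfolding lin_AL_def by measurable
qed

definition past :: "'w measure \<Rightarrow> (nat \<Rightarrow> 'w \<Rightarrow> 'q::topological_space) \<Rightarrow> nat \<Rightarrow> 'w measure" where
  "past M \<xi>s k = sigma (space M) (\<Union>i\<in>{..<k}. {\<xi>s i -` A \<inter> space M | A. A \<in> sets borel})"

lemma space_past[simp]: "space (past M \<xi>s k) = space M"
  unfolding past_def by (rule space_measure_of) auto

lemma sets_past:
  "sets (past M \<xi>s k) = sigma_sets (space M) (\<Union>i\<in>{..<k}. {\<xi>s i -` A \<inter> space M | A. A \<in> sets borel})"
  unfolding past_def by (rule sets_measure_of) auto

lemma subalgebra_past:
  assumes "\<And>k. \<xi>s k \<in> borel_measurable M"
  shows "subalgebra M (past M \<xi>s k)"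
  unfolding subalgebra_def
proof
  show "sets (past M \<xi>s k) \<subseteq> sets M" unfolding sets_past
    using assms by (intro sets.sigma_sets_subset) (auto simp: measurable_sets)
qed simp

lemma subalgebra_past_Suc: "subalgebra (past M \<xi>s (Suc k)) (past M \<xi>s k)"
  unfolding subalgebra_def sets_past
  by (auto intro!: sigma_sets_mono' intro: less_SucI)

lemma measurable_past_sample: "j < k \<Longrightarrow> \<xi>s j \<in> borel_measurable (past M \<xi>s k)"
  by (rule measurableI) (auto simp: sets_past intro!: sigma_sets.Basic)

lemma Int_stable_vimage_sets: "Int_stable {f -` A \<inter> S | A. A \<in> sets N}"
proof (rule Int_stableI)
  fix a b assume "a \<in> {f -` A \<inter> S | A. A \<in> sets N}" "b \<in> {f -` A \<inter> S | A. A \<in> sets N}"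
  then obtain A B where "A \<in> sets N" "B \<in> sets N" "a = f -` A \<inter> S" "b = f -` B \<inter> S" by auto
  then show "a \<inter> b \<in> {f -` A \<inter> S | A. A \<in> sets N}" by (intro CollectI exI[of _ "A \<inter> B"]) auto
qed

context prob_space
begin

lemma indep_var_past_sample:
  fixes \<xi>s :: "nat \<Rightarrow> 'a \<Rightarrow> 'q::topological_space"
  assumes ind: "indep_vars (\<lambda>_. borel) \<xi>s UNIV"
    and meas: "\<And>k. \<xi>s k \<in> borel_measurable M"
    and Y: "Y \<in> measurable (past M \<xi>s k) (borel :: 'b::topological_space measure)"
    and \<phi>: "\<phi> \<in> measurable (borel :: 'q measure) (borel :: 'b measure)"
  shows "indep_var borel Y borel (\<lambda>\<omega>. \<phi> (\<xi>s k \<omega>))"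
proof -
  define E where "E i = {\<xi>s i -` A \<inter> space M | A. A \<in> sets borel}" for i
  have indE: "indep_sets E UNIV" using ind unfolding indep_vars_def2 E_def by simp
  define J where "J b = (if b then {..<k} else {k})" for b :: bool
  have IS: "Int_stable (E i)" for i
    unfolding E_def by (rule Int_stable_vimage_sets)
  have coll: "indep_sets (\<lambda>b. sigma_sets (space M) (\<Union>i\<in>J b. E i)) UNIV"
    by (rule indep_sets_collect_sigma) (auto intro: indep_sets_mono_index[OF _ indE] IS
        simp: disjoint_family_on_def J_def)
  have YM: "Y \<in> measurable M borel"
    using measurable_from_subalg[OF subalgebra_past[OF meas] Y] .
  show ?thesis
    unfolding indep_var_def indep_vars_def2
  proof
    show "\<forall>i\<in>UNIV. random_variable (case_bool borel borel i) (case_bool Y (\<lambda>\<omega>. \<phi> (\<xi>s k \<omega>)) i)"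
      using YM measurable_compose[OF meas \<phi>] by (auto split: bool.split)
    show "indep_sets (\<lambda>i. {case_bool Y (\<lambda>\<omega>. \<phi> (\<xi>s k \<omega>)) i -` A \<inter> space M |A.
        A \<in> sets (case_bool borel borel i)}) UNIV"
    proof (rule indep_sets_mono_sets[OF coll])
      fix b :: bool
      show "{case_bool Y (\<lambda>\<omega>. \<phi> (\<xi>s k \<omega>)) b -` A \<inter> space M |A. A \<in> sets (case_bool borel borel b)}
          \<subseteq> sigma_sets (space M) (\<Union>i\<in>J b. E i)"
      proof (cases b)
        case True
        have "Y -` A \<inter> space M \<in> sigma_sets (space M) (\<Union>i\<in>{..<k}. E i)" if "A \<in> sets borel" for A
          using measurable_sets[OF Y that] unfolding sets_past E_def by simp
        then show ?thesis using True by (auto simp: J_def)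
      next
        case False
        have "(\<lambda>\<omega>. \<phi> (\<xi>s k \<omega>)) -` A \<inter> space M \<in> sigma_sets (space M) (E k)" if "A \<in> sets borel" for A
        proof -
          have "(\<lambda>\<omega>. \<phi> (\<xi>s k \<omega>)) -` A \<inter> space M = \<xi>s k -` (\<phi> -` A \<inter> space borel) \<inter> space M" by auto
          moreover have "\<phi> -` A \<inter> space borel \<in> sets borel" using measurable_sets[OF \<phi> that] .
          ultimately show ?thesis unfolding E_def by (auto intro!: sigma_sets.Basic)
        qed
        then show ?thesis using False by (auto simp: J_def)
      qed
    qed
  qed
qed

lemma integral_indep_var_iterated:
  fixes X :: "'a \<Rightarrow> 'b::euclidean_space" and E :: "'a \<Rightarrow> 'b"
    and H :: "'b \<Rightarrow> 'b \<Rightarrow> real"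
  assumes ind: "indep_var borel X borel E"
    and H: "(\<lambda>(x, e). H x e) \<in> borel_measurable borel"
    and int: "integrable M (\<lambda>\<omega>. H (X \<omega>) (E \<omega>))"
  shows "(\<integral>\<omega>. H (X \<omega>) (E \<omega>) \<partial>M) = (\<integral>\<omega>. (\<integral>\<omega>'. H (X \<omega>) (E \<omega>') \<partial>M) \<partial>M)"
proof -
  from ind have rvX: "X \<in> borel_measurable M" and rvE: "E \<in> borel_measurable M"
    and deq: "distr M borel X \<Otimes>\<^sub>M distr M borel E = distr M (borel \<Otimes>\<^sub>M borel) (\<lambda>x. (X x, E x))"
    unfolding indep_var_distribution_eq by auto
  define P where "P = distr M borel X"
  define Q where "Q = distr M borel E"
  interpret P: prob_space P unfolding P_def by (rule prob_space_distr[OF rvX])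
  interpret Q: prob_space Q unfolding Q_def by (rule prob_space_distr[OF rvE])
  interpret PQ: pair_sigma_finite P Q ..
  have Hp: "(\<lambda>(x, e). H x e) \<in> borel_measurable (borel \<Otimes>\<^sub>M borel)" using H by (simp add: borel_prod)
  have pm: "(\<lambda>x. (X x, E x)) \<in> measurable M (borel \<Otimes>\<^sub>M borel)" using rvX rvE by (rule measurable_Pair)
  have "(\<integral>\<omega>. H (X \<omega>) (E \<omega>) \<partial>M) = integral\<^sup>L (distr M (borel \<Otimes>\<^sub>M borel) (\<lambda>x. (X x, E x))) (\<lambda>(x, e). H x e)"
    by (subst integral_distr[OF pm Hp]) simp
  also have "\<dots> = integral\<^sup>L (P \<Otimes>\<^sub>M Q) (\<lambda>(x, e). H x e)"
    unfolding P_def Q_def deq ..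
  also have "\<dots> = (\<integral>x. (\<integral>e. H x e \<partial>Q) \<partial>P)"
  proof -
    have "integrable (distr M (borel \<Otimes>\<^sub>M borel) (\<lambda>x. (X x, E x))) (\<lambda>(x, e). H x e)"
      by (subst integrable_distr_eq[OF pm Hp]) (simp add: int)
    then have "integrable (P \<Otimes>\<^sub>M Q) (\<lambda>(x, e). H x e)" unfolding P_def Q_def deq .
    from PQ.integral_fst'[OF this] show ?thesis by simp
  qed
  also have "\<dots> = (\<integral>x. (\<integral>\<omega>'. H x (E \<omega>') \<partial>M) \<partial>P)"
  proof -
    have "(\<lambda>e. H x e) \<in> borel_measurable borel" for x
      using measurable_compose[OF measurable_Pair[OF measurable_const[of x] measurable_ident_sets[OF refl]] Hp] by simp
    then show ?thesis unfolding Q_def by (subst integral_distr[OF rvE]) auto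
  qed
  also have "\<dots> = (\<integral>\<omega>. (\<integral>\<omega>'. H (X \<omega>) (E \<omega>') \<partial>M) \<partial>M)"
  proof -
    have "case_prod (\<lambda>x \<omega>'. H x (E \<omega>')) \<in> borel_measurable (borel \<Otimes>\<^sub>M M)"
      using measurable_compose[OF measurable_Pair[OF measurable_fst measurable_compose[OF measurable_snd rvE]] Hp]
      by (simp add: split_beta')
    then have "(\<lambda>x. \<integral>\<omega>'. H x (E \<omega>') \<partial>M) \<in> borel_measurable borel"
      by (rule borel_measurable_lebesgue_integral)
    then show ?thesis unfolding P_def by (subst integral_distr[OF rvX]) auto
  qed
  finally show ?thesis .
qed

end

text \<open>The hypotheses of the theorem, except those the argument never uses: nonemptiness of C
  (implied by x0 \<in> C), continuity of F, and convexity and continuity of the G_i.\<close>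
locale slpmm = prob_space M for M :: "'w measure" +
  fixes \<xi> :: "'w \<Rightarrow> 'q::euclidean_space"
    and \<xi>s :: "nat \<Rightarrow> 'w \<Rightarrow> 'q"
    and \<Xi> :: "'q set"
    and C :: "'a::euclidean_space set"
    and F :: "'a \<Rightarrow> 'q \<Rightarrow> real"
    and G :: "nat \<Rightarrow> 'a \<Rightarrow> 'q \<Rightarrow> real"
    and v0 :: "'a \<Rightarrow> 'q \<Rightarrow> 'a"
    and v :: "nat \<Rightarrow> 'a \<Rightarrow> 'q \<Rightarrow> 'a"
    and p :: nat
    and \<sigma> \<alpha> R \<nu>g \<kappa>f \<kappa>g :: real
    and x0 :: 'a
    and xs :: "nat \<Rightarrow> 'w \<Rightarrow> 'a"
    and lam :: "nat \<Rightarrow> 'w \<Rightarrow> nat \<Rightarrow> real"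
  assumes \<xi>_measurable: "\<xi> \<in> borel_measurable M"
    and \<Xi>_sets: "\<Xi> \<in> sets borel"
    and AE_\<xi>_in_\<Xi>: "AE \<omega> in M. \<xi> \<omega> \<in> \<Xi>"
    and \<xi>s_measurable: "\<And>k. \<xi>s k \<in> borel_measurable M"
    and \<xi>s_indep: "indep_vars (\<lambda>_. borel) \<xi>s UNIV"
    and \<xi>s_distr: "\<And>k. distr M borel (\<xi>s k) = distr M borel \<xi>"
    and C_compact: "compact C" and C_convex: "convex C"
    and F_measurable: "(\<lambda>(x, e). F x e) \<in> borel_measurable borel"
    and G_measurable: "\<And>i. i \<in> {1..p} \<Longrightarrow> (\<lambda>(x, e). G i x e) \<in> borel_measurable borel"
    and v0_measurable: "(\<lambda>(x, e). v0 x e) \<in> borel_measurable borel"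
    and v_measurable: "\<And>i. i \<in> {1..p} \<Longrightarrow> (\<lambda>(x, e). v i x e) \<in> borel_measurable borel"
    and F_convex: "\<And>e. e \<in> \<Xi> \<Longrightarrow> convex_on C (\<lambda>x. F x e)"
    and F_integrable: "\<And>x. x \<in> C \<Longrightarrow> integrable M (\<lambda>\<omega>. F x (\<xi> \<omega>))"
    and G_integrable: "\<And>i x. i \<in> {1..p} \<Longrightarrow> x \<in> C \<Longrightarrow> integrable M (\<lambda>\<omega>. G i x (\<xi> \<omega>))"
    and v0_subgrad: "\<And>x e. x \<in> C \<Longrightarrow> e \<in> \<Xi> \<Longrightarrow> subgrad_on C (\<lambda>y. F y e) x (v0 x e)"
    and v_subgrad: "\<And>i x e. i \<in> {1..p} \<Longrightarrow> x \<in> C \<Longrightarrow> e \<in> \<Xi> \<Longrightarrow>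
      subgrad_on C (\<lambda>y. G i y e) x (v i x e)"
    and C_diameter: "\<And>x' x''. x' \<in> C \<Longrightarrow> x'' \<in> C \<Longrightarrow> norm (x' - x'') \<le> R"
    and G_bounded: "\<And>x e. x \<in> C \<Longrightarrow> e \<in> \<Xi> \<Longrightarrow> sqrt (\<Sum>i=1..p. (G i x e)\<^sup>2) \<le> \<nu>g"
    and v0_bounded: "\<And>x e. x \<in> C \<Longrightarrow> e \<in> \<Xi> \<Longrightarrow> norm (v0 x e) \<le> \<kappa>f"
    and v_bounded: "\<And>i x e. i \<in> {1..p} \<Longrightarrow> x \<in> C \<Longrightarrow> e \<in> \<Xi> \<Longrightarrow> norm (v i x e) \<le> \<kappa>g"
    and \<sigma>_pos: "\<sigma> > 0" and \<alpha>_pos: "\<alpha> > 0"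
    and x0_in_C: "x0 \<in> C"
    and xs_0: "\<And>\<omega>. \<omega> \<in> space M \<Longrightarrow> xs 0 \<omega> = x0"
    and lam_0: "\<And>\<omega> i. \<omega> \<in> space M \<Longrightarrow> i \<in> {1..p} \<Longrightarrow> lam 0 \<omega> i = 0"
    and xs_Suc: "\<And>k \<omega>. \<omega> \<in> space M \<Longrightarrow>
      xs (Suc k) \<omega> \<in> C \<and>
      (\<forall>y\<in>C. lin_AL F G v0 v p \<sigma> (xs k \<omega>) (\<xi>s k \<omega>) (xs (Suc k) \<omega>) (lam k \<omega>)
                 + \<alpha> / 2 * (norm (xs (Suc k) \<omega> - xs k \<omega>))\<^sup>2
               \<le> lin_AL F G v0 v p \<sigma> (xs k \<omega>) (\<xi>s k \<omega>) y (lam k \<omega>)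
                 + \<alpha> / 2 * (norm (y - xs k \<omega>))\<^sup>2)"
    and lam_Suc: "\<And>k \<omega> i. \<omega> \<in> space M \<Longrightarrow> i \<in> {1..p} \<Longrightarrow>
      lam (Suc k) \<omega> i = pos_part (lam k \<omega> i + \<sigma> * (G i (xs k \<omega>) (\<xi>s k \<omega>)
               + inner (v i (xs k \<omega>) (\<xi>s k \<omega>)) (xs (Suc k) \<omega> - xs k \<omega>)))"
begin

lemma \<Xi>_nonempty: "\<Xi> \<noteq> {}"
proof
  assume "\<Xi> = {}"
  then have "AE \<omega> in M. False" using AE_\<xi>_in_\<Xi> by simp
  then show False by (simp add: AE_False)
qed

lemma \<kappa>f_nonneg: "0 \<le> \<kappa>f"
proof -
  obtain e where "e \<in> \<Xi>" using \<Xi>_nonempty by blast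
  then show ?thesis using v0_bounded[OF x0_in_C, of e] norm_ge_zero[of "v0 x0 e"] by linarith
qed

lemma \<nu>g_nonneg: "0 \<le> \<nu>g"
proof -
  obtain e where "e \<in> \<Xi>" using \<Xi>_nonempty by blast
  have "0 \<le> sqrt (\<Sum>i=1..p. (G i x0 e)\<^sup>2)" by (simp add: sum_nonneg)
  then show ?thesis using G_bounded[OF x0_in_C \<open>e \<in> \<Xi>\<close>] by linarith
qed

lemma R_nonneg: "0 \<le> R"
  using C_diameter[OF x0_in_C x0_in_C] by simp

lemma xs_in_C: "\<omega> \<in> space M \<Longrightarrow> xs k \<omega> \<in> C"
  using xs_0 x0_in_C xs_Suc by (cases k) auto

lemma lam_nonneg: "\<omega> \<in> space M \<Longrightarrow> i \<in> {1..p} \<Longrightarrow> 0 \<le> lam k \<omega> i"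
  using lam_0 lam_Suc by (cases k) (auto simp: pos_part_def)

lemma AE_\<xi>s_in_\<Xi>: "AE \<omega> in M. \<xi>s k \<omega> \<in> \<Xi>"
proof -
  have "AE e in distr M borel \<xi>. e \<in> \<Xi>"
    using AE_\<xi>_in_\<Xi> \<Xi>_sets by (subst AE_distr_iff[OF \<xi>_measurable]) auto
  then have "AE e in distr M borel (\<xi>s k). e \<in> \<Xi>" by (simp only: \<xi>s_distr)
  then show ?thesis using \<Xi>_sets by (subst (asm) AE_distr_iff[OF \<xi>s_measurable]) auto
qed

lemma AE_all_\<xi>s_in_\<Xi>: "AE \<omega> in M. \<forall>k. \<xi>s k \<omega> \<in> \<Xi>"
  using AE_\<xi>s_in_\<Xi> by (simp add: AE_all_countable)

lemma integral_\<xi>s_eq: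
  "(h :: 'q \<Rightarrow> real) \<in> borel_measurable borel \<Longrightarrow> (\<integral>\<omega>. h (\<xi>s k \<omega>) \<partial>M) = (\<integral>\<omega>. h (\<xi> \<omega>) \<partial>M)"
  using integral_distr[OF \<xi>s_measurable, of h k] integral_distr[OF \<xi>_measurable, of h] \<xi>s_distr[of k]
  by simp

lemma integrable_\<xi>s_iff:
  "(h :: 'q \<Rightarrow> real) \<in> borel_measurable borel \<Longrightarrow>
    integrable M (\<lambda>\<omega>. h (\<xi>s k \<omega>)) \<longleftrightarrow> integrable M (\<lambda>\<omega>. h (\<xi> \<omega>))"
  using integrable_distr_eq[OF \<xi>s_measurable, of h k] integrable_distr_eq[OF \<xi>_measurable, of h]
    \<xi>s_distr[of k]
  by simp

lemma F_section_measurable: "(\<lambda>e. F x e) \<in> borel_measurable borel"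
  using borel_measurable_uncurry_comp[OF F_measurable measurable_const[of x borel] measurable_ident_sets[OF refl]]
  by simp

lemma G_section_measurable: "i \<in> {1..p} \<Longrightarrow> (\<lambda>e. G i x e) \<in> borel_measurable borel"
  using borel_measurable_uncurry_comp[OF G_measurable measurable_const[of x borel] measurable_ident_sets[OF refl]]
  by simp

lemma F_lipschitz:
  assumes "x \<in> C" "y \<in> C" "e \<in> \<Xi>"
  shows "\<bar>F x e - F y e\<bar> \<le> \<kappa>f * norm (x - y)"
proof -
  have "F y e + inner (v0 y e) (x - y) \<le> F x e" "F x e + inner (v0 x e) (y - x) \<le> F y e"
    using v0_subgrad assms unfolding subgrad_on_def by auto
  moreover have "\<bar>inner (v0 y e) (x - y)\<bar> \<le> \<kappa>f * norm (x - y)"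
    using Cauchy_Schwarz_ineq2[of "v0 y e" "x - y"] v0_bounded[OF assms(2,3)]
    by (meson mult_right_mono norm_ge_zero order_trans)
  moreover have "\<bar>inner (v0 x e) (y - x)\<bar> \<le> \<kappa>f * norm (x - y)"
    using Cauchy_Schwarz_ineq2[of "v0 x e" "y - x"] v0_bounded[OF assms(1,3)]
    by (metis mult_right_mono norm_ge_zero order_trans norm_minus_commute)
  ultimately show ?thesis by linarith
qed

lemma F_deviation_bound: "x \<in> C \<Longrightarrow> e \<in> \<Xi> \<Longrightarrow> \<bar>F x e - F x0 e\<bar> \<le> \<kappa>f * R"
  using F_lipschitz[OF _ x0_in_C] mult_left_mono[OF C_diameter[OF _ x0_in_C] \<kappa>f_nonneg]
  by (meson order_trans)

definition expected_F :: "'a \<Rightarrow> real" where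
  "expected_F x = (\<integral>\<omega>. F x (\<xi> \<omega>) \<partial>M)"

lemma expected_F_measurable: "expected_F \<in> borel_measurable borel"
proof -
  have "case_prod (\<lambda>x \<omega>'. F x (\<xi> \<omega>')) \<in> borel_measurable (borel \<Otimes>\<^sub>M M)"
    using borel_measurable_uncurry_comp[OF F_measurable measurable_fst measurable_compose[OF measurable_snd \<xi>_measurable]]
    by (simp add: split_beta')
  then show ?thesis unfolding expected_F_def by (rule borel_measurable_lebesgue_integral)
qed

lemma expected_F_deviation_bound:
  assumes "x \<in> C"
  shows "\<bar>expected_F x - expected_F x0\<bar> \<le> \<kappa>f * R"
proof -
  have int: "integrable M (\<lambda>\<omega>. F x (\<xi> \<omega>))" "integrable M (\<lambda>\<omega>. F x0 (\<xi> \<omega>))"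
    using F_integrable assms x0_in_C by auto
  have bound: "AE \<omega> in M. \<bar>F x (\<xi> \<omega>) - F x0 (\<xi> \<omega>)\<bar> \<le> \<kappa>f * R"
    using AE_\<xi>_in_\<Xi> by eventually_elim (rule F_deviation_bound[OF assms])
  have "\<bar>\<integral>\<omega>. F x (\<xi> \<omega>) - F x0 (\<xi> \<omega>) \<partial>M\<bar> \<le> (\<integral>\<omega>. \<bar>F x (\<xi> \<omega>) - F x0 (\<xi> \<omega>)\<bar> \<partial>M)"
    by (rule integral_abs_bound)
  also have "\<dots> \<le> (\<integral>\<omega>. \<kappa>f * R \<partial>M)"
    using int bound by (intro integral_mono_AE) auto
  finally have "\<bar>\<integral>\<omega>. F x (\<xi> \<omega>) - F x0 (\<xi> \<omega>) \<partial>M\<bar> \<le> \<kappa>f * R"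
    by (simp add: prob_space)
  then show ?thesis
    unfolding expected_F_def using int by simp
qed

lemma integrable_expected_F_comp:
  assumes Y: "Y \<in> borel_measurable M" "\<And>\<omega>. \<omega> \<in> space M \<Longrightarrow> Y \<omega> \<in> C"
  shows "integrable M (\<lambda>\<omega>. expected_F (Y \<omega>))"
proof (rule integrable_const_bound[where B = "\<bar>expected_F x0\<bar> + \<kappa>f * R"])
  show "AE \<omega> in M. norm (expected_F (Y \<omega>)) \<le> \<bar>expected_F x0\<bar> + \<kappa>f * R"
    using expected_F_deviation_bound[OF Y(2)] by (intro AE_I2) fastforce
  show "(\<lambda>\<omega>. expected_F (Y \<omega>)) \<in> borel_measurable M"
    using measurable_compose[OF Y(1) expected_F_measurable] .
qed

lemma xs_Suc_measurable:
  assumes N: "space N = space M"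
    and X: "xs k \<in> borel_measurable N"
    and L: "\<And>i. i \<in> {1..p} \<Longrightarrow> (\<lambda>\<omega>. lam k \<omega> i) \<in> borel_measurable N"
    and E: "\<xi>s k \<in> borel_measurable N"
  shows "xs (Suc k) \<in> borel_measurable N"
proof -
  define \<psi> where "\<psi> \<omega> y = lin_AL F G v0 v p \<sigma> (xs k \<omega>) (\<xi>s k \<omega>) y (lam k \<omega>)
    + \<alpha> / 2 * (norm (y - xs k \<omega>))\<^sup>2" for \<omega> y
  show ?thesis
  proof (rule borel_measurable_strict_minimizer[where C = C and a = "\<alpha> / 2" and \<psi> = \<psi>])
    show "compact C" "C \<noteq> {}" "\<alpha> / 2 > 0" using C_compact x0_in_C \<alpha>_pos by auto
    show "(\<lambda>\<omega>. \<psi> \<omega> y) \<in> borel_measurable N" for y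
    proof -
      have [measurable]: "(\<lambda>\<omega>. lin_AL F G v0 v p \<sigma> (xs k \<omega>) (\<xi>s k \<omega>) y (lam k \<omega>)) \<in> borel_measurable N"
        using lin_AL_borel_measurable[OF F_measurable G_measurable v0_measurable v_measurable X E,
            where Y = "\<lambda>_. y" and Lm = "\<lambda>\<omega>. lam k \<omega>"] L
        by simp
      note [measurable] = X
      show ?thesis unfolding \<psi>_def by measurable
    qed
    show "xs (Suc k) \<omega> \<in> C" if "\<omega> \<in> space N" for \<omega>
      using that xs_in_C N by simp
    show "continuous_on C (\<psi> \<omega>)" for \<omega>
      unfolding \<psi>_def
      by (intro continuous_on_add continuous_on_subset[OF lin_AL_continuous] continuous_intros) auto
    show "\<psi> \<omega> (xs (Suc k) \<omega>) + \<alpha> / 2 * (norm (y - xs (Suc k) \<omega>))\<^sup>2 \<le> \<psi> \<omega> y"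
      if "\<omega> \<in> space N" "y \<in> C" for \<omega> y
    proof -
      have "convex_on C (\<lambda>y. lin_AL F G v0 v p \<sigma> (xs k \<omega>) (\<xi>s k \<omega>) y (lam k \<omega>))"
        by (rule convex_on_subset[OF lin_AL_convex[OF \<sigma>_pos] _ C_convex]) simp
      moreover have "xs (Suc k) \<omega> \<in> C"
        and "\<forall>y\<in>C. lin_AL F G v0 v p \<sigma> (xs k \<omega>) (\<xi>s k \<omega>) (xs (Suc k) \<omega>) (lam k \<omega>)
                 + \<alpha> / 2 * (norm (xs (Suc k) \<omega> - xs k \<omega>))\<^sup>2
               \<le> lin_AL F G v0 v p \<sigma> (xs k \<omega>) (\<xi>s k \<omega>) y (lam k \<omega>)
                 + \<alpha> / 2 * (norm (y - xs k \<omega>))\<^sup>2"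
        using xs_Suc[of \<omega> k] that N by auto
      ultimately show ?thesis
        unfolding \<psi>_def by (rule convex_prox_three_point[OF _ C_convex _ \<alpha>_pos _ \<open>y \<in> C\<close>])
    qed
  qed
qed

lemma lam_Suc_measurable:
  assumes N: "space N = space M"
    and X: "xs k \<in> borel_measurable N" "xs (Suc k) \<in> borel_measurable N"
    and L: "(\<lambda>\<omega>. lam k \<omega> i) \<in> borel_measurable N"
    and E: "\<xi>s k \<in> borel_measurable N"
    and i: "i \<in> {1..p}"
  shows "(\<lambda>\<omega>. lam (Suc k) \<omega> i) \<in> borel_measurable N"
proof -
  note [measurable] = X L
    borel_measurable_uncurry_comp[OF G_measurable[OF i] X(1) E]
    borel_measurable_uncurry_comp[OF v_measurable[OF i] X(1) E]
  have "(\<lambda>\<omega>. pos_part (lam k \<omega> i + \<sigma> * (G i (xs k \<omega>) (\<xi>s k \<omega>)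
      + inner (v i (xs k \<omega>) (\<xi>s k \<omega>)) (xs (Suc k) \<omega> - xs k \<omega>)))) \<in> borel_measurable N"
    by measurable
  then show ?thesis
    using measurable_cong[of N "\<lambda>\<omega>. lam (Suc k) \<omega> i"] lam_Suc[OF _ i] N by simp
qed

lemma iterates_measurable_past:
  "xs k \<in> borel_measurable (past M \<xi>s k) \<and>
    (\<forall>i\<in>{1..p}. (\<lambda>\<omega>. lam k \<omega> i) \<in> borel_measurable (past M \<xi>s k))"
proof (induction k)
  case 0
  have "xs 0 \<in> borel_measurable (past M \<xi>s 0)"
    using measurable_cong[of "past M \<xi>s 0" "xs 0" "\<lambda>_. x0"] xs_0 by simp
  moreover have "(\<lambda>\<omega>. lam 0 \<omega> i) \<in> borel_measurable (past M \<xi>s 0)" if "i \<in> {1..p}" for i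
    using measurable_cong[of "past M \<xi>s 0" "\<lambda>\<omega>. lam 0 \<omega> i" "\<lambda>_. 0"] lam_0 that by simp
  ultimately show ?case by blast
next
  case (Suc k)
  have past: "X \<in> measurable (past M \<xi>s k) B \<Longrightarrow> X \<in> measurable (past M \<xi>s (Suc k)) B"
    for X and B :: "'b measure"
    by (rule measurable_from_subalg[OF subalgebra_past_Suc])
  have X: "xs k \<in> borel_measurable (past M \<xi>s (Suc k))"
    and L: "\<And>i. i \<in> {1..p} \<Longrightarrow> (\<lambda>\<omega>. lam k \<omega> i) \<in> borel_measurable (past M \<xi>s (Suc k))"
    using Suc.IH past by blast+
  have E: "\<xi>s k \<in> borel_measurable (past M \<xi>s (Suc k))"
    by (rule measurable_past_sample) simp
  have X1: "xs (Suc k) \<in> borel_measurable (past M \<xi>s (Suc k))"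
    by (rule xs_Suc_measurable[OF space_past X L E])
  show ?case
    using X1 lam_Suc_measurable[OF space_past X X1 L E] by blast
qed

lemma subalgebra_past_samples: "subalgebra M (past M \<xi>s k)"
  by (rule subalgebra_past) (rule \<xi>s_measurable)

lemma xs_measurable: "xs k \<in> borel_measurable M"
  using measurable_from_subalg[OF subalgebra_past_samples] iterates_measurable_past by blast

lemma lam_measurable: "i \<in> {1..p} \<Longrightarrow> (\<lambda>\<omega>. lam k \<omega> i) \<in> borel_measurable M"
  using measurable_from_subalg[OF subalgebra_past_samples] iterates_measurable_past by blast

lemma indep_var_xs_sample:
  "indep_var borel (\<lambda>\<omega>. (xs k \<omega>, 0::'q)) borel (\<lambda>\<omega>. (0::'a, \<xi>s k \<omega>))"
proof -
  have "(\<lambda>\<omega>. (xs k \<omega>, 0::'q)) \<in> measurable (past M \<xi>s k) (borel \<Otimes>\<^sub>M borel)"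
    using iterates_measurable_past[of k] by (intro measurable_Pair) auto
  then have "(\<lambda>\<omega>. (xs k \<omega>, 0::'q)) \<in> borel_measurable (past M \<xi>s k)"
    by (simp add: borel_prod)
  moreover have "(\<lambda>e. (0::'a, e)) \<in> measurable (borel :: 'q measure) borel"
    by (rule borel_measurable_continuous_onI) (intro continuous_intros)
  ultimately show ?thesis
    by (rule indep_var_past_sample[OF \<xi>s_indep \<xi>s_measurable])
qed

lemma integrable_F_iterate: "integrable M (\<lambda>\<omega>. F (xs k \<omega>) (\<xi>s k \<omega>))"
proof (rule Bochner_Integration.integrable_bound[where f = "\<lambda>\<omega>. \<bar>F x0 (\<xi>s k \<omega>)\<bar> + \<kappa>f * R"])
  have "integrable M (\<lambda>\<omega>. F x0 (\<xi>s k \<omega>))"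
    using integrable_\<xi>s_iff[OF F_section_measurable] F_integrable[OF x0_in_C] by simp
  then show "integrable M (\<lambda>\<omega>. \<bar>F x0 (\<xi>s k \<omega>)\<bar> + \<kappa>f * R)" by auto
  show "(\<lambda>\<omega>. F (xs k \<omega>) (\<xi>s k \<omega>)) \<in> borel_measurable M"
    by (rule borel_measurable_uncurry_comp[OF F_measurable xs_measurable \<xi>s_measurable])
  show "AE \<omega> in M. norm (F (xs k \<omega>) (\<xi>s k \<omega>)) \<le> norm (\<bar>F x0 (\<xi>s k \<omega>)\<bar> + \<kappa>f * R)"
    using AE_\<xi>s_in_\<Xi>[of k]
  proof (rule AE_mp, intro AE_I2 impI)
    fix \<omega> assume "\<omega> \<in> space M" "\<xi>s k \<omega> \<in> \<Xi>"
    then have "\<bar>F (xs k \<omega>) (\<xi>s k \<omega>) - F x0 (\<xi>s k \<omega>)\<bar> \<le> \<kappa>f * R"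
      using F_deviation_bound xs_in_C by blast
    moreover have "0 \<le> \<kappa>f * R" using \<kappa>f_nonneg R_nonneg by simp
    ultimately show "norm (F (xs k \<omega>) (\<xi>s k \<omega>)) \<le> norm (\<bar>F x0 (\<xi>s k \<omega>)\<bar> + \<kappa>f * R)"
      by simp
  qed
qed

text \<open>The iterate x^k depends only on the samples before k, so it is independent of the sample
  used at step k.\<close>
lemma integral_F_iterate:
  "(\<integral>\<omega>. F (xs k \<omega>) (\<xi>s k \<omega>) \<partial>M) = (\<integral>\<omega>. expected_F (xs k \<omega>) \<partial>M)"
proof -
  have "(\<lambda>(u, w). F (fst u) (snd w)) \<in> borel_measurable (borel :: (('a \<times> 'q) \<times> ('a \<times> 'q)) measure)"
  proof -
    have "(\<lambda>q::('a \<times> 'q) \<times> ('a \<times> 'q). fst (fst q)) \<in> borel_measurable borel"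
      "(\<lambda>q::('a \<times> 'q) \<times> ('a \<times> 'q). snd (snd q)) \<in> borel_measurable borel"
      by (rule borel_measurable_continuous_onI, intro continuous_intros)+
    then show ?thesis
      using borel_measurable_uncurry_comp[OF F_measurable] by (simp add: split_beta')
  qed
  then have "(\<integral>\<omega>. F (xs k \<omega>) (\<xi>s k \<omega>) \<partial>M) = (\<integral>\<omega>. (\<integral>\<omega>'. F (xs k \<omega>) (\<xi>s k \<omega>') \<partial>M) \<partial>M)"
    using integral_indep_var_iterated[OF indep_var_xs_sample[of k],
        where H = "\<lambda>u w. F (fst u) (snd w)"] integrable_F_iterate[of k]
    by simp
  then show ?thesis
    unfolding expected_F_def using integral_\<xi>s_eq[OF F_section_measurable] by simp
qed

lemma lam_le:
  assumes \<omega>: "\<omega> \<in> space M" "\<forall>j. \<xi>s j \<omega> \<in> \<Xi>" and i: "i \<in> {1..p}"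
  shows "lam k \<omega> i \<le> real k * (\<sigma> * (\<nu>g + \<kappa>g * R))"
proof (induction k)
  case 0
  then show ?case using lam_0[OF \<omega>(1) i] by simp
next
  case (Suc k)
  define x where "x = xs k \<omega>"
  define e where "e = \<xi>s k \<omega>"
  have x: "x \<in> C" and x1: "xs (Suc k) \<omega> \<in> C" and e: "e \<in> \<Xi>"
    unfolding x_def e_def using xs_in_C \<omega> by auto
  have "(G i x e)\<^sup>2 \<le> (\<Sum>j=1..p. (G j x e)\<^sup>2)"
    using i by (intro member_le_sum) auto
  then have "\<bar>G i x e\<bar> \<le> sqrt (\<Sum>j=1..p. (G j x e)\<^sup>2)"
    using real_sqrt_le_mono real_sqrt_abs by metis
  then have G_le: "G i x e \<le> \<nu>g" using G_bounded[OF x e] by linarith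
  have \<kappa>g: "0 \<le> \<kappa>g" using v_bounded[OF i x e] norm_ge_zero[of "v i x e"] by linarith
  have "inner (v i x e) (xs (Suc k) \<omega> - x) \<le> norm (v i x e) * norm (xs (Suc k) \<omega> - x)"
    using Cauchy_Schwarz_ineq2[of "v i x e" "xs (Suc k) \<omega> - x"] by linarith
  also have "\<dots> \<le> \<kappa>g * R"
    using v_bounded[OF i x e] C_diameter[OF x1 x] \<kappa>g by (intro mult_mono) auto
  finally have "\<sigma> * (G i x e + inner (v i x e) (xs (Suc k) \<omega> - x)) \<le> \<sigma> * (\<nu>g + \<kappa>g * R)"
    using G_le \<sigma>_pos by (intro mult_left_mono) auto
  then have "lam k \<omega> i + \<sigma> * (G i x e + inner (v i x e) (xs (Suc k) \<omega> - x))
      \<le> real (Suc k) * (\<sigma> * (\<nu>g + \<kappa>g * R))"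
    using Suc.IH by (simp add: distrib_right)
  moreover have "0 \<le> real (Suc k) * (\<sigma> * (\<nu>g + \<kappa>g * R))"
    using \<sigma>_pos \<nu>g_nonneg \<kappa>g R_nonneg by simp
  ultimately show ?case
    using lam_Suc[OF \<omega>(1) i, of k] unfolding x_def e_def pos_part_def by simp
qed

lemma integrable_lam:
  assumes "i \<in> {1..p}"
  shows "integrable M (\<lambda>\<omega>. lam k \<omega> i)"
proof (rule integrable_const_bound[where B = "real k * (\<sigma> * (\<nu>g + \<kappa>g * R))"])
  show "AE \<omega> in M. norm (lam k \<omega> i) \<le> real k * (\<sigma> * (\<nu>g + \<kappa>g * R))"
    using AE_all_\<xi>s_in_\<Xi>
  proof (rule AE_mp, intro AE_I2 impI)
    fix \<omega> assume "\<omega> \<in> space M" "\<forall>j. \<xi>s j \<omega> \<in> \<Xi>"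
    then show "norm (lam k \<omega> i) \<le> real k * (\<sigma> * (\<nu>g + \<kappa>g * R))"
      using lam_nonneg[OF _ assms] lam_le[OF _ _ assms] by simp
  qed
qed (rule lam_measurable[OF assms])

text \<open>Independence of the multiplier from the current sample turns the complementarity term
  into the product of the expectations, whose second factor is g_i(z) \<le> 0.\<close>
lemma integral_lam_G_nonpos:
  assumes z: "z \<in> C" "(\<integral>\<omega>. G i z (\<xi> \<omega>) \<partial>M) \<le> 0" and i: "i \<in> {1..p}"
  shows "integrable M (\<lambda>\<omega>. lam k \<omega> i * G i z (\<xi>s k \<omega>))"
    and "(\<integral>\<omega>. lam k \<omega> i * G i z (\<xi>s k \<omega>) \<partial>M) \<le> 0"
proof -
  have indep: "indep_var borel (\<lambda>\<omega>. lam k \<omega> i) borel (\<lambda>\<omega>. G i z (\<xi>s k \<omega>))"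
    using indep_var_past_sample[OF \<xi>s_indep \<xi>s_measurable _ G_section_measurable[OF i]]
      iterates_measurable_past[of k] i
    by blast
  have int_G: "integrable M (\<lambda>\<omega>. G i z (\<xi>s k \<omega>))"
    using integrable_\<xi>s_iff[OF G_section_measurable[OF i]] G_integrable[OF i z(1)] by simp
  show "integrable M (\<lambda>\<omega>. lam k \<omega> i * G i z (\<xi>s k \<omega>))"
    by (rule indep_var_integrable[OF indep integrable_lam[OF i] int_G])
  have "(\<integral>\<omega>. lam k \<omega> i * G i z (\<xi>s k \<omega>) \<partial>M)
      = (\<integral>\<omega>. lam k \<omega> i \<partial>M) * (\<integral>\<omega>. G i z (\<xi> \<omega>) \<partial>M)"
    using indep_var_lebesgue_integral[OF indep integrable_lam[OF i] int_G]
      integral_\<xi>s_eq[OF G_section_measurable[OF i]]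
    by simp
  also have "\<dots> \<le> 0"
    using z(2) lam_nonneg[OF _ i] by (intro mult_nonneg_nonpos integral_nonneg_AE) auto
  finally show "(\<integral>\<omega>. lam k \<omega> i * G i z (\<xi>s k \<omega>) \<partial>M) \<le> 0" .
qed

lemma iterate_step_bound:
  assumes \<omega>: "\<omega> \<in> space M" "\<xi>s k \<omega> \<in> \<Xi>" and z: "z \<in> C"
  shows "F (xs k \<omega>) (\<xi>s k \<omega>) - F z (\<xi>s k \<omega>)
    \<le> \<kappa>f\<^sup>2 / (2 * \<alpha>) + \<sigma> / 2 * \<nu>g\<^sup>2 + (\<Sum>i=1..p. lam k \<omega> i * G i z (\<xi>s k \<omega>))
      + \<alpha> / 2 * ((norm (z - xs k \<omega>))\<^sup>2 - (norm (z - xs (Suc k) \<omega>))\<^sup>2)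
      + 1 / (2 * \<sigma>) * ((\<Sum>i=1..p. (lam k \<omega> i)\<^sup>2) - (\<Sum>i=1..p. (lam (Suc k) \<omega> i)\<^sup>2))"
proof -
  have x: "xs k \<omega> \<in> C" and x1: "xs (Suc k) \<omega> \<in> C" using xs_in_C[OF \<omega>(1)] by auto
  show ?thesis
    by (rule lin_AL_prox_step_bound[OF \<sigma>_pos \<alpha>_pos C_convex x x1 z])
      (use v0_subgrad[OF x \<omega>(2)] v_subgrad[OF _ x \<omega>(2)] v0_bounded[OF x \<omega>(2)]
        G_bounded[OF z \<omega>(2)] xs_Suc[OF \<omega>(1)] lam_Suc[OF \<omega>(1)] in auto)
qed

lemma pathwise_sum_bound:
  assumes \<omega>: "\<omega> \<in> space M" "\<forall>j. \<xi>s j \<omega> \<in> \<Xi>" and z: "z \<in> C"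
  shows "(\<Sum>k<K. F (xs k \<omega>) (\<xi>s k \<omega>) - F z (\<xi>s k \<omega>))
    \<le> (\<Sum>k<K. \<Sum>i=1..p. lam k \<omega> i * G i z (\<xi>s k \<omega>))
      + real K * (\<kappa>f\<^sup>2 / (2 * \<alpha>) + \<sigma> / 2 * \<nu>g\<^sup>2) + \<alpha> / 2 * R\<^sup>2"
proof -
  define c where "c = \<kappa>f\<^sup>2 / (2 * \<alpha>) + \<sigma> / 2 * \<nu>g\<^sup>2"
  define D where "D k = (norm (z - xs k \<omega>))\<^sup>2" for k
  define S where "S k = (\<Sum>i=1..p. (lam k \<omega> i)\<^sup>2)" for k
  define LG where "LG k = (\<Sum>i=1..p. lam k \<omega> i * G i z (\<xi>s k \<omega>))" for k
  have "(\<Sum>k<K. F (xs k \<omega>) (\<xi>s k \<omega>) - F z (\<xi>s k \<omega>))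
      \<le> (\<Sum>k<K. c + LG k + \<alpha> / 2 * (D k - D (Suc k)) + 1 / (2 * \<sigma>) * (S k - S (Suc k)))"
    using iterate_step_bound[OF \<omega>(1) _ z] \<omega>(2) unfolding c_def D_def S_def LG_def
    by (intro sum_mono) blast
  also have "\<dots> = real K * c + (\<Sum>k<K. LG k) + \<alpha> / 2 * (D 0 - D K) + 1 / (2 * \<sigma>) * (S 0 - S K)"
  proof -
    have "(\<Sum>k<K. \<alpha> / 2 * (D k - D (Suc k))) = \<alpha> / 2 * (D 0 - D K)"
      "(\<Sum>k<K. 1 / (2 * \<sigma>) * (S k - S (Suc k))) = 1 / (2 * \<sigma>) * (S 0 - S K)"
      by (simp_all only: sum_distrib_left[symmetric] sum_lessThan_telescope')
    then show ?thesis by (simp only: sum.distrib) simp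
  qed
  also have "\<dots> \<le> real K * c + (\<Sum>k<K. LG k) + \<alpha> / 2 * R\<^sup>2"
  proof -
    have "D 0 \<le> R\<^sup>2"
      unfolding D_def using C_diameter[OF z x0_in_C] xs_0[OF \<omega>(1)] by (simp add: power_mono)
    moreover have "0 \<le> D K" "0 \<le> S K" unfolding D_def S_def by (auto intro: sum_nonneg)
    moreover have "S 0 = 0" unfolding S_def using lam_0[OF \<omega>(1)] by simp
    ultimately have "\<alpha> / 2 * (D 0 - D K) \<le> \<alpha> / 2 * R\<^sup>2" "1 / (2 * \<sigma>) * (S 0 - S K) \<le> 0"
      using \<alpha>_pos \<sigma>_pos by (auto intro: mult_left_mono mult_nonneg_nonpos)
    then show ?thesis by linarith
  qed
  finally show ?thesis unfolding c_def LG_def by simp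
qed

lemma sum_expected_F_iterates_le:
  assumes z: "z \<in> C" "\<And>i. i \<in> {1..p} \<Longrightarrow> (\<integral>\<omega>. G i z (\<xi> \<omega>) \<partial>M) \<le> 0"
  shows "(\<Sum>k<K. \<integral>\<omega>. expected_F (xs k \<omega>) \<partial>M)
    \<le> real K * (expected_F z + \<kappa>f\<^sup>2 / (2 * \<alpha>) + \<sigma> / 2 * \<nu>g\<^sup>2) + \<alpha> / 2 * R\<^sup>2"
proof -
  define c where "c = real K * (\<kappa>f\<^sup>2 / (2 * \<alpha>) + \<sigma> / 2 * \<nu>g\<^sup>2) + \<alpha> / 2 * R\<^sup>2"
  have int_Fz: "integrable M (\<lambda>\<omega>. F z (\<xi>s k \<omega>))" for k
    using integrable_\<xi>s_iff[OF F_section_measurable] F_integrable[OF z(1)] by simp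
  have int_LG: "integrable M (\<lambda>\<omega>. \<Sum>i=1..p. lam k \<omega> i * G i z (\<xi>s k \<omega>))" for k
    using integral_lam_G_nonpos(1)[OF z] by (intro Bochner_Integration.integrable_sum)
  have "(\<Sum>k<K. \<integral>\<omega>. expected_F (xs k \<omega>) \<partial>M) = (\<integral>\<omega>. (\<Sum>k<K. F (xs k \<omega>) (\<xi>s k \<omega>)) \<partial>M)"
    by (simp add: integral_F_iterate integrable_F_iterate)
  also have "\<dots> \<le> (\<integral>\<omega>. (\<Sum>k<K. F z (\<xi>s k \<omega>))
      + (\<Sum>k<K. \<Sum>i=1..p. lam k \<omega> i * G i z (\<xi>s k \<omega>)) + c \<partial>M)"
  proof (rule integral_mono_AE)
    show "AE \<omega> in M. (\<Sum>k<K. F (xs k \<omega>) (\<xi>s k \<omega>))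
        \<le> (\<Sum>k<K. F z (\<xi>s k \<omega>)) + (\<Sum>k<K. \<Sum>i=1..p. lam k \<omega> i * G i z (\<xi>s k \<omega>)) + c"
      using AE_all_\<xi>s_in_\<Xi>
    proof (rule AE_mp, intro AE_I2 impI)
      fix \<omega> assume "\<omega> \<in> space M" "\<forall>j. \<xi>s j \<omega> \<in> \<Xi>"
      from pathwise_sum_bound[OF this z(1), of K]
      show "(\<Sum>k<K. F (xs k \<omega>) (\<xi>s k \<omega>))
          \<le> (\<Sum>k<K. F z (\<xi>s k \<omega>)) + (\<Sum>k<K. \<Sum>i=1..p. lam k \<omega> i * G i z (\<xi>s k \<omega>)) + c"
        unfolding c_def sum_subtractf by linarith
    qed
  qed (use integrable_F_iterate int_Fz int_LG in auto)
  also have "\<dots> = real K * expected_F z + (\<Sum>k<K. \<Sum>i=1..p. \<integral>\<omega>. lam k \<omega> i * G i z (\<xi>s k \<omega>) \<partial>M) + c"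
    using int_Fz int_LG integral_lam_G_nonpos(1)[OF z]
    by (simp add: prob_space Bochner_Integration.integral_sum expected_F_def
        integral_\<xi>s_eq[OF F_section_measurable])
  also have "\<dots> \<le> real K * expected_F z + c"
    using integral_lam_G_nonpos(2)[OF z] by (auto intro!: sum_nonpos)
  finally show ?thesis unfolding c_def by (simp add: algebra_simps)
qed

lemma expected_F_average_le:
  assumes K: "K \<ge> 1"
  shows "(\<integral>\<omega>. expected_F ((1 / real K) *\<^sub>R (\<Sum>k<K. xs k \<omega>)) \<partial>M)
    \<le> 1 / real K * (\<Sum>k<K. \<integral>\<omega>. expected_F (xs k \<omega>) \<partial>M)"
proof -
  define xb where "xb \<omega> = (\<Sum>k<K. (1 / real K) *\<^sub>R xs k \<omega>)" for \<omega>
  have weights: "(\<Sum>k<K. 1 / real K) = 1" using K by simp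
  have xb_in_C: "xb \<omega> \<in> C" if "\<omega> \<in> space M" for \<omega>
    unfolding xb_def using convex_sum[OF _ C_convex weights] xs_in_C[OF that] by simp
  have jensen: "expected_F (xb \<omega>) \<le> (\<Sum>k<K. 1 / real K * expected_F (xs k \<omega>))"
    if \<omega>: "\<omega> \<in> space M" for \<omega>
  proof -
    have "F (xb \<omega>) e \<le> (\<Sum>k<K. 1 / real K * F (xs k \<omega>) e)" if "e \<in> \<Xi>" for e
      unfolding xb_def
      using convex_on_sum[of "{..<K}" C "\<lambda>x. F x e" "\<lambda>_. 1 / real K" "\<lambda>k. xs k \<omega>"]
        F_convex[OF that] K weights xs_in_C[OF \<omega>]
      by fastforce
    then have "expected_F (xb \<omega>) \<le> (\<integral>\<omega>'. (\<Sum>k<K. 1 / real K * F (xs k \<omega>) (\<xi> \<omega>')) \<partial>M)"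
      unfolding expected_F_def using AE_\<xi>_in_\<Xi>
      by (intro integral_mono_AE) (auto elim!: eventually_mono intro!: F_integrable xb_in_C[OF \<omega>] xs_in_C[OF \<omega>])
    also have "\<dots> = (\<Sum>k<K. 1 / real K * expected_F (xs k \<omega>))"
      unfolding expected_F_def using F_integrable xs_in_C[OF \<omega>]
      by (simp add: Bochner_Integration.integral_sum)
    finally show ?thesis .
  qed
  have "(\<integral>\<omega>. expected_F (xb \<omega>) \<partial>M) \<le> (\<integral>\<omega>. (\<Sum>k<K. 1 / real K * expected_F (xs k \<omega>)) \<partial>M)"
  proof (rule integral_mono)
    show "integrable M (\<lambda>\<omega>. expected_F (xb \<omega>))"
      unfolding xb_def using xs_measurable xb_in_C[unfolded xb_def]
      by (intro integrable_expected_F_comp) auto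
    show "integrable M (\<lambda>\<omega>. \<Sum>k<K. 1 / real K * expected_F (xs k \<omega>))"
      by (intro Bochner_Integration.integrable_sum integrable_mult_right
          integrable_expected_F_comp xs_measurable xs_in_C)
  qed (rule jensen)
  also have "\<dots> = 1 / real K * (\<Sum>k<K. \<integral>\<omega>. expected_F (xs k \<omega>) \<partial>M)"
    by (simp add: Bochner_Integration.integral_sum integrable_expected_F_comp xs_measurable xs_in_C
        sum_distrib_left)
  finally show ?thesis unfolding xb_def by (simp add: scaleR_sum_right)
qed

end

theorem lemma8:
  fixes M :: "'w measure"
    and \<xi> :: "'w \<Rightarrow> 'q::euclidean_space"
    and \<xi>s :: "nat \<Rightarrow> 'w \<Rightarrow> 'q"
    and \<Xi> :: "'q set"
    and C :: "'a::euclidean_space set"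
    and F :: "'a \<Rightarrow> 'q \<Rightarrow> real"
    and G :: "nat \<Rightarrow> 'a \<Rightarrow> 'q \<Rightarrow> real"
    and v0 :: "'a \<Rightarrow> 'q \<Rightarrow> 'a"
    and v :: "nat \<Rightarrow> 'a \<Rightarrow> 'q \<Rightarrow> 'a"
    and p :: nat
    and \<sigma> \<alpha> R \<nu>g \<kappa>f \<kappa>g :: real
    and x0 :: 'a
    and xs :: "nat \<Rightarrow> 'w \<Rightarrow> 'a"
    and lam :: "nat \<Rightarrow> 'w \<Rightarrow> nat \<Rightarrow> real"
    and K :: nat
    and z :: 'a
  assumes M: "prob_space M"
    \<comment> \<open>the random vector xi, supported on Xi, and i.i.d. copies xi^0, xi^1, ...\<close>
    and \<xi>_meas: "\<xi> \<in> borel_measurable M"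
    and \<Xi>_borel: "\<Xi> \<in> sets borel"
    and \<xi>_supp: "AE \<omega> in M. \<xi> \<omega> \<in> \<Xi>"
    and \<xi>s_meas: "\<And>k. \<xi>s k \<in> borel_measurable M"
    and \<xi>s_indep: "prob_space.indep_vars M (\<lambda>_. borel) \<xi>s UNIV"
    and \<xi>s_distr: "\<And>k. distr M borel (\<xi>s k) = distr M borel \<xi>"
    \<comment> \<open>the set C\<close>
    and C: "compact C" "convex C" "C \<noteq> {}"
    \<comment> \<open>(implicit) measurability of the data\<close>
    and F_meas: "(\<lambda>(x, e). F x e) \<in> borel_measurable borel"
    and G_meas: "\<And>i. i \<in> {1..p} \<Longrightarrow> (\<lambda>(x, e). G i x e) \<in> borel_measurable borel"
    and v0_meas: "(\<lambda>(x, e). v0 x e) \<in> borel_measurable borel"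
    and v_meas: "\<And>i. i \<in> {1..p} \<Longrightarrow> (\<lambda>(x, e). v i x e) \<in> borel_measurable borel"
    \<comment> \<open>convexity and continuity in x\<close>
    and F_cvx: "\<And>e. e \<in> \<Xi> \<Longrightarrow> convex_on C (\<lambda>x. F x e) \<and> continuous_on C (\<lambda>x. F x e)"
    and G_cvx: "\<And>i e. i \<in> {1..p} \<Longrightarrow> e \<in> \<Xi> \<Longrightarrow>
                  convex_on C (\<lambda>x. G i x e) \<and> continuous_on C (\<lambda>x. G i x e)"
    \<comment> \<open>f and g_i finite on C\<close>
    and F_int: "\<And>x. x \<in> C \<Longrightarrow> integrable M (\<lambda>\<omega>. F x (\<xi> \<omega>))"
    and G_int: "\<And>i x. i \<in> {1..p} \<Longrightarrow> x \<in> C \<Longrightarrow> integrable M (\<lambda>\<omega>. G i x (\<xi> \<omega>))"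
    \<comment> \<open>stochastic subgradients\<close>
    and v0_sub: "\<And>x e. x \<in> C \<Longrightarrow> e \<in> \<Xi> \<Longrightarrow> subgrad_on C (\<lambda>y. F y e) x (v0 x e)"
    and v_sub: "\<And>i x e. i \<in> {1..p} \<Longrightarrow> x \<in> C \<Longrightarrow> e \<in> \<Xi> \<Longrightarrow>
                  subgrad_on C (\<lambda>y. G i y e) x (v i x e)"
    \<comment> \<open>(A1)--(A3)\<close>
    and A1: "\<And>x' x''. x' \<in> C \<Longrightarrow> x'' \<in> C \<Longrightarrow> norm (x' - x'') \<le> R"
    and A2: "\<And>x e. x \<in> C \<Longrightarrow> e \<in> \<Xi> \<Longrightarrow> sqrt (\<Sum>i=1..p. (G i x e)\<^sup>2) \<le> \<nu>g"
    and A3f: "\<And>x e. x \<in> C \<Longrightarrow> e \<in> \<Xi> \<Longrightarrow> norm (v0 x e) \<le> \<kappa>f"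
    and A3g: "\<And>i x e. i \<in> {1..p} \<Longrightarrow> x \<in> C \<Longrightarrow> e \<in> \<Xi> \<Longrightarrow> norm (v i x e) \<le> \<kappa>g"
    \<comment> \<open>SLPMM with parameters sigma, alpha > 0\<close>
    and \<sigma>_pos: "\<sigma> > 0" and \<alpha>_pos: "\<alpha> > 0"
    and x0: "x0 \<in> C"
    and xs0: "\<And>\<omega>. \<omega> \<in> space M \<Longrightarrow> xs 0 \<omega> = x0"
    and lam0: "\<And>\<omega> i. \<omega> \<in> space M \<Longrightarrow> i \<in> {1..p} \<Longrightarrow> lam 0 \<omega> i = 0"
    and xs_step: "\<And>k \<omega>. \<omega> \<in> space M \<Longrightarrow>
        xs (Suc k) \<omega> \<in> C \<and>
        (\<forall>y\<in>C. lin_AL F G v0 v p \<sigma> (xs k \<omega>) (\<xi>s k \<omega>) (xs (Suc k) \<omega>) (lam k \<omega>)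
                   + \<alpha> / 2 * (norm (xs (Suc k) \<omega> - xs k \<omega>))\<^sup>2
                 \<le> lin_AL F G v0 v p \<sigma> (xs k \<omega>) (\<xi>s k \<omega>) y (lam k \<omega>)
                   + \<alpha> / 2 * (norm (y - xs k \<omega>))\<^sup>2)"
    and lam_step: "\<And>k \<omega> i. \<omega> \<in> space M \<Longrightarrow> i \<in> {1..p} \<Longrightarrow>
        lam (Suc k) \<omega> i = pos_part (lam k \<omega> i + \<sigma> * (G i (xs k \<omega>) (\<xi>s k \<omega>)
                 + inner (v i (xs k \<omega>) (\<xi>s k \<omega>)) (xs (Suc k) \<omega> - xs k \<omega>)))"
    and K: "K \<ge> 1"
    \<comment> \<open>z feasible: z in C and g_i(z) <= 0\<close>
    and z: "z \<in> C" "\<And>i. i \<in> {1..p} \<Longrightarrow> (\<integral>\<omega>. G i z (\<xi> \<omega>) \<partial>M) \<le> 0"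
  shows "(\<integral>\<omega>. (\<integral>\<omega>'. F ((1 / real K) *\<^sub>R (\<Sum>k<K. xs k \<omega>)) (\<xi> \<omega>') \<partial>M) \<partial>M)
           - (\<integral>\<omega>'. F z (\<xi> \<omega>') \<partial>M)
         \<le> \<kappa>f\<^sup>2 / (2 * \<alpha>) + \<sigma> / 2 * \<nu>g\<^sup>2 + \<alpha> / (2 * real K) * R\<^sup>2"
proof -
  interpret slpmm M \<xi> \<xi>s \<Xi> C F G v0 v p \<sigma> \<alpha> R \<nu>g \<kappa>f \<kappa>g x0 xs lam
    by (intro slpmm.intro[OF M] slpmm_axioms.intro) (use assms in auto)
  have "(\<integral>\<omega>. expected_F ((1 / real K) *\<^sub>R (\<Sum>k<K. xs k \<omega>)) \<partial>M)
      \<le> 1 / real K * (\<Sum>k<K. \<integral>\<omega>. expected_F (xs k \<omega>) \<partial>M)"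
    by (rule expected_F_average_le[OF K])
  also have "\<dots> \<le> 1 / real K * (real K * (expected_F z + \<kappa>f\<^sup>2 / (2 * \<alpha>) + \<sigma> / 2 * \<nu>g\<^sup>2) + \<alpha> / 2 * R\<^sup>2)"
    using sum_expected_F_iterates_le[OF z] K by (intro mult_left_mono) auto
  also have "\<dots> = expected_F z + \<kappa>f\<^sup>2 / (2 * \<alpha>) + \<sigma> / 2 * \<nu>g\<^sup>2 + \<alpha> / (2 * real K) * R\<^sup>2"
    using K by (simp add: field_simps)
  finally show ?thesis unfolding expected_F_def by simp
qed

end
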